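(* Let $M$ be an entrywise nonnegative $m\times n$ real matrix and let $M=AW$ be a stable nonnegative matrix factorization with $A\in\mathbb{R}_{\ge0}^{m\times r}$, $W\in\mathbb{R}_{\ge0}^{r\times n}$. Let $s=\mathrm{rank}(A)$, $t=\mathrm{rank}(W)$, let $U\subseteq[m]$ be a set of $s$ linearly independent rows of $A$ and $V\subseteq[n]$ a set of $t$ linearly independent columns of $W$, and let $B_1,\dots,B_p$ be the ensemble of $A$ at $U$ and $C_1,\dots,C_q$ the ensemble of $W$ at $V$. Then the test $\mathbb P$ outputs PASS on these $B_1,\dots,B_p$ and $C_1,\dots,C_q$.
   Context: Notation: $M_i$ is the $i$-th column, $M^j$ the $j$-th row; $A_S$ = columns in $S$, $A^U$ = rows in $U$; $M_i^U$ the entries of $M_i$ in rows $U$, $M^j_V$ the entries of $M^j$ in columns $V$. $\mathrm{aff}(A)=\{\sum_k\alpha_kA_k:\alpha_k\ge0\}$. A subset $S\subseteq[r]$ of columns of $A$ is admissible for $v\in\mathbb{R}^m$ if $v\in\mathrm{aff}(A_S)$; a subset $T\subseteq[r]$ of rows of $W$ is admissible for a row vector $u$ if $u$ is a nonnegative combination of the rows of $W^T$. Support = set of indices of nonzero entries. Lexicographic ordering on subsets of $[r]$: if $|S|<|T|$ then $S$ precedes $T$; equal-size subsets compared by standard lexicographic order. $M=AW$ is stable if, with $S_i$ the lexicographically first subset of columns of $A$ admissible for $M_i$ and $T_j$ the lexicographically first subset of rows of $W$ admissible for $M^j$, each $W_i$ is supported in $S_i$ and each row $A^j$ is supported in $T_j$.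 Ensemble of $A$ at $U$: with $S_1,\dots,S_p$ all sets of $s$ linearly independent columns of $A$ in lexicographic order, $B_k$ is the $r\times s$ matrix zero on rows outside $S_k$ whose restriction to rows $S_k$ is $(A^U_{S_k})^{-1}$. Ensemble of $W$ at $V$: with $T_1,\dots,T_q$ all sets of $t$ linearly independent rows of $W$ in lexicographic order, $C_k$ is the $t\times r$ matrix zero on columns outside $T_k$ whose restriction to columns $T_k$ is $(W^{T_k}_V)^{-1}$. For a finite collection $\mathcal S$ of vectors, $\mathrm{first}(\mathcal S)$ is the vector with lexicographically minimal support among the entrywise nonnegative vectors in $\mathcal S$, and is FAIL if there is none or if two or more distinct nonnegative vectors tie for the earliest support. Test $\mathbb P$: set $\hat W_i=\mathrm{first}(\{B_1M_i^U,\dots,B_pM_i^U\})$ and $\hat A^j=\mathrm{first}(\{M^j_VC_1,\dots,M^j_VC_q\})$; PASS iff none is FAIL and $\hat A^j\hat W_i=M^j_i$ for all $i,j$. *)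

theory Defs
  imports Complex_Main
begin

text \<open>Matrices are functions nat => nat => real; an m x r matrix X has entries X a k for
a < m, k < r.  Vectors are functions nat => real.  Index sets are subsets of {..<_}.\<close>

definition matprod :: "nat \<Rightarrow> (nat \<Rightarrow> nat \<Rightarrow> real) \<Rightarrow> (nat \<Rightarrow> nat \<Rightarrow> real) \<Rightarrow> (nat \<Rightarrow> nat \<Rightarrow> real)" where
  "matprod r A W = (\<lambda>a b. \<Sum>k<r. A a k * W k b)"

definition nonneg_mat :: "nat \<Rightarrow> nat \<Rightarrow> (nat \<Rightarrow> nat \<Rightarrow> real) \<Rightarrow> bool" where
  "nonneg_mat nr nc X \<longleftrightarrow> (\<forall>a<nr. \<forall>b<nc. 0 \<le> X a b)"

definition indep_cols :: "nat \<Rightarrow> (nat \<Rightarrow> nat \<Rightarrow> real) \<Rightarrow> nat set \<Rightarrow> bool" where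
  "indep_cols nr X S \<longleftrightarrow>
     (\<forall>c. (\<forall>a<nr. (\<Sum>k\<in>S. c k * X a k) = 0) \<longrightarrow> (\<forall>k\<in>S. c k = 0))"

definition indep_rows :: "nat \<Rightarrow> (nat \<Rightarrow> nat \<Rightarrow> real) \<Rightarrow> nat set \<Rightarrow> bool" where
  "indep_rows nc X U \<longleftrightarrow>
     (\<forall>c. (\<forall>b<nc. (\<Sum>a\<in>U. c a * X a b) = 0) \<longrightarrow> (\<forall>a\<in>U. c a = 0))"

definition mat_rank :: "nat \<Rightarrow> nat \<Rightarrow> (nat \<Rightarrow> nat \<Rightarrow> real) \<Rightarrow> nat" where
  "mat_rank nr nc X = Max {card S | S. S \<subseteq> {..<nc} \<and> indep_cols nr X S}"

definition set_lex_less :: "nat set \<Rightarrow> nat set \<Rightarrow> bool" where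
  "set_lex_less S T \<longleftrightarrow> card S < card T \<or>
     (card S = card T \<and> ord_class.lexordp (sorted_list_of_set S) (sorted_list_of_set T))"

definition lex_first :: "nat \<Rightarrow> (nat set \<Rightarrow> bool) \<Rightarrow> nat set" where
  "lex_first r P = (THE S. S \<subseteq> {..<r} \<and> P S \<and>
      (\<forall>T. T \<subseteq> {..<r} \<and> P T \<and> T \<noteq> S \<longrightarrow> set_lex_less S T))"

definition col_admissible :: "nat \<Rightarrow> (nat \<Rightarrow> nat \<Rightarrow> real) \<Rightarrow> nat set \<Rightarrow> (nat \<Rightarrow> real) \<Rightarrow> bool" where
  "col_admissible m A S x \<longleftrightarrow>
     (\<exists>\<alpha>. (\<forall>k\<in>S. 0 \<le> \<alpha> k) \<and> (\<forall>a<m. x a = (\<Sum>k\<in>S. \<alpha> k * A a k)))"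

definition row_admissible :: "nat \<Rightarrow> (nat \<Rightarrow> nat \<Rightarrow> real) \<Rightarrow> nat set \<Rightarrow> (nat \<Rightarrow> real) \<Rightarrow> bool" where
  "row_admissible n W T u \<longleftrightarrow>
     (\<exists>\<beta>. (\<forall>k\<in>T. 0 \<le> \<beta> k) \<and> (\<forall>b<n. u b = (\<Sum>k\<in>T. \<beta> k * W k b)))"

definition stable :: "nat \<Rightarrow> nat \<Rightarrow> nat \<Rightarrow> (nat \<Rightarrow> nat \<Rightarrow> real) \<Rightarrow> (nat \<Rightarrow> nat \<Rightarrow> real) \<Rightarrow> (nat \<Rightarrow> nat \<Rightarrow> real) \<Rightarrow> bool" where
  "stable m n r M A W \<longleftrightarrow>
     (\<forall>i<n. \<forall>k<r. W k i \<noteq> 0 \<longrightarrow>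
         k \<in> lex_first r (\<lambda>S. col_admissible m A S (\<lambda>a. M a i))) \<and>
     (\<forall>j<m. \<forall>k<r. A j k \<noteq> 0 \<longrightarrow>
         k \<in> lex_first r (\<lambda>T. row_admissible n W T (\<lambda>b. M j b)))"

text \<open>The ensemble member of A at U for the column set S: the r x |U| matrix
(rows indexed by [r], columns by U) which is zero on rows outside S and whose
restriction to rows S is the inverse of the square matrix A^U_S.\<close>
definition ens_A_mat :: "(nat \<Rightarrow> nat \<Rightarrow> real) \<Rightarrow> nat set \<Rightarrow> nat set \<Rightarrow> (nat \<Rightarrow> nat \<Rightarrow> real)" where
  "ens_A_mat A U S = (THE X. (\<forall>l u. (l \<notin> S \<or> u \<notin> U) \<longrightarrow> X l u = 0) \<and>
      (\<forall>u\<in>U. \<forall>u'\<in>U. (\<Sum>l\<in>S. A u l * X l u') = (if u = u' then 1 else 0)))"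

definition ensemble_A :: "nat \<Rightarrow> nat \<Rightarrow> (nat \<Rightarrow> nat \<Rightarrow> real) \<Rightarrow> nat set \<Rightarrow> (nat \<Rightarrow> nat \<Rightarrow> real) set" where
  "ensemble_A m r A U =
     {ens_A_mat A U S | S. S \<subseteq> {..<r} \<and> card S = card U \<and> indep_cols m A S}"

text \<open>The ensemble member of W at V for the row set T: the |V| x r matrix
(rows indexed by V, columns by [r]) which is zero on columns outside T and whose
restriction to columns T is the inverse of the square matrix W^T_V.\<close>
definition ens_W_mat :: "(nat \<Rightarrow> nat \<Rightarrow> real) \<Rightarrow> nat set \<Rightarrow> nat set \<Rightarrow> (nat \<Rightarrow> nat \<Rightarrow> real)" where
  "ens_W_mat W V T = (THE Y. (\<forall>v l. (v \<notin> V \<or> l \<notin> T) \<longrightarrow> Y v l = 0) \<and>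
      (\<forall>v\<in>V. \<forall>v'\<in>V. (\<Sum>l\<in>T. Y v l * W l v') = (if v = v' then 1 else 0)))"

definition ensemble_W :: "nat \<Rightarrow> nat \<Rightarrow> (nat \<Rightarrow> nat \<Rightarrow> real) \<Rightarrow> nat set \<Rightarrow> (nat \<Rightarrow> nat \<Rightarrow> real) set" where
  "ensemble_W n r W V =
     {ens_W_mat W V T | T. T \<subseteq> {..<r} \<and> card T = card V \<and> indep_rows n W T}"

text \<open>Support of a length-r vector, and the operator first (None = FAIL).\<close>
definition vsupp :: "nat \<Rightarrow> (nat \<Rightarrow> real) \<Rightarrow> nat set" where
  "vsupp r x = {l. l < r \<and> x l \<noteq> 0}"

definition first_vec :: "nat \<Rightarrow> (nat \<Rightarrow> real) set \<Rightarrow> (nat \<Rightarrow> real) option" where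
  "first_vec r \<S> =
     (let N = {x \<in> \<S>. \<forall>l<r. 0 \<le> x l} in
      if N = {} then None else
      (let S0 = lex_first r (\<lambda>S. S \<in> vsupp r ` N);
           cands = {x \<in> N. vsupp r x = S0} in
       if card cands = 1 then Some (the_elem cands) else None))"

definition test_P :: "nat \<Rightarrow> nat \<Rightarrow> nat \<Rightarrow> (nat \<Rightarrow> nat \<Rightarrow> real) \<Rightarrow> nat set \<Rightarrow> nat set \<Rightarrow>
    (nat \<Rightarrow> nat \<Rightarrow> real) set \<Rightarrow> (nat \<Rightarrow> nat \<Rightarrow> real) set \<Rightarrow> bool" where
  "test_P m n r M U V Bs Cs \<longleftrightarrow>
     (let hatW = (\<lambda>i. first_vec r ((\<lambda>B. \<lambda>l. \<Sum>u\<in>U. B l u * M u i) ` Bs));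
          hatA = (\<lambda>j. first_vec r ((\<lambda>C. \<lambda>l. \<Sum>v\<in>V. M j v * C v l) ` Cs)) in
      (\<forall>i<n. hatW i \<noteq> None) \<and> (\<forall>j<m. hatA j \<noteq> None) \<and>
      (\<forall>i<n. \<forall>j<m. (\<Sum>l<r. the (hatA j) l * the (hatW i) l) = M j i))"

end

theory Submission
  imports Defs "HOL-Library.Function_Algebras" "HOL-Library.List_Lexorder"
    "HOL-Library.Product_Lexorder"
begin

text \<open>By stability, the support of the column W_i lies in S, the lexicographically first set
  of columns of A admissible for M_i. A minimal admissible set consists of linearly independent
  columns and carries only strictly positive representations, so W_i is the unique nonnegative
  vector supported exactly on S with A W_i = M_i. Since the rows U span the row space of A, every
  vector B_k M_i^U of the ensemble solves A y = M_i; if it is nonnegative its support is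
  admissible and so cannot precede S, and if its support is S it equals W_i. Extending S to a
  maximal independent set of columns yields an ensemble member producing W_i itself. Hence first
  returns W_i; transposing gives the rows of A, and the final check is M = A W.\<close>

section \<open>Linear independence of families of real functions\<close>

definition lin_indep :: "nat set \<Rightarrow> (nat \<Rightarrow> nat \<Rightarrow> real) \<Rightarrow> bool" where
  "lin_indep I f \<longleftrightarrow> (\<forall>c. (\<forall>x. (\<Sum>i\<in>I. c i * f i x) = 0) \<longrightarrow> (\<forall>i\<in>I. c i = 0))"

definition in_span :: "nat set \<Rightarrow> (nat \<Rightarrow> nat \<Rightarrow> real) \<Rightarrow> (nat \<Rightarrow> real) \<Rightarrow> bool" where
  "in_span I f v \<longleftrightarrow> (\<exists>c. \<forall>x. v x = (\<Sum>i\<in>I. c i * f i x))"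

lemma sum_fun_apply: "(sum F A) x = (\<Sum>a\<in>A. F a x)"
  by (induct A rule: infinite_finite_induct) auto

interpretation fv: vector_space "\<lambda>(c::real) (v::nat \<Rightarrow> real) x. c * v x"
  by unfold_locales (auto simp: fun_eq_iff algebra_simps)

lemma lin_indepD:
  "lin_indep I f \<Longrightarrow> (\<And>x. (\<Sum>i\<in>I. c i * f i x) = 0) \<Longrightarrow> i \<in> I \<Longrightarrow> c i = 0"
  unfolding lin_indep_def by blast

lemma lin_indep_inj_on:
  assumes "lin_indep I f" "finite I"
  shows "inj_on f I"
proof (rule inj_onI, rule ccontr)
  fix i j assume ij: "i \<in> I" "j \<in> I" "f i = f j" "i \<noteq> j"
  define c where "c l = (if l = i then 1 else 0) - (if l = j then 1 else (0::real))" for l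
  have "(\<Sum>l\<in>I. c l * f l x) =
      (\<Sum>l\<in>I. if l = i then f l x else 0) - (\<Sum>l\<in>I. if l = j then f l x else 0)" for x
    unfolding sum_subtractf[symmetric] by (intro sum.cong) (auto simp: c_def)
  then have "(\<Sum>l\<in>I. c l * f l x) = 0" for x
    using ij assms(2) by simp
  from lin_indepD[OF assms(1) this \<open>i \<in> I\<close>] ij(4) show False by (simp add: c_def)
qed

lemma lin_indep_card_le:
  assumes fin: "finite I" "finite K" and indep: "lin_indep I f"
    and span: "\<forall>i\<in>I. in_span K g (f i)"
  shows "card I \<le> card K"
proof -
  have inj: "inj_on f I" using lin_indep_inj_on indep fin(1) by blast
  have "fv.independent (f ` I)"
  proof (rule fv.independent_if_scalars_zero)
    show "finite (f ` I)" using fin(1) by simp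
  next
    fix d v assume d: "(\<Sum>w\<in>f ` I. (\<lambda>x. d w * w x)) = 0" and "v \<in> f ` I"
    then obtain i where i: "i \<in> I" "v = f i" by blast
    have "(\<Sum>j\<in>I. d (f j) * f j x) = 0" for x
      using d by (simp add: fun_eq_iff sum_fun_apply sum.reindex[OF inj])
    from lin_indepD[OF indep this i(1)] i(2) show "d v = 0" by simp
  qed
  moreover have "f ` I \<subseteq> fv.span (g ` K)"
  proof
    fix v assume "v \<in> f ` I"
    then obtain c where "\<forall>x. v x = (\<Sum>k\<in>K. c k * g k x)"
      using span unfolding in_span_def by blast
    then have "v = (\<Sum>k\<in>K. (\<lambda>x. c k * g k x))" by (simp add: fun_eq_iff sum_fun_apply)
    also have "\<dots> \<in> fv.span (g ` K)"
      by (intro fv.span_sum fv.span_scale fv.span_base) auto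
    finally show "v \<in> fv.span (g ` K)" .
  qed
  ultimately have "card (f ` I) \<le> card (g ` K)"
    using fv.independent_span_bound fin(2) by blast
  also have "\<dots> \<le> card K" using card_image_le fin(2) by blast
  finally show ?thesis using card_image[OF inj] by simp
qed

lemma lin_indep_insert:
  assumes indep: "lin_indep I f" and "j \<notin> I" "finite I" and new: "\<not> in_span I f v"
  shows "lin_indep (insert j I) (f(j := v))"
  unfolding lin_indep_def
proof (intro allI impI)
  fix c assume "\<forall>x. (\<Sum>i\<in>insert j I. c i * (f(j := v)) i x) = 0"
  moreover have "(\<Sum>i\<in>I. c i * (f(j := v)) i x) = (\<Sum>i\<in>I. c i * f i x)" for x
    using \<open>j \<notin> I\<close> by (intro sum.cong) auto
  ultimately have rel: "c j * v x + (\<Sum>i\<in>I. c i * f i x) = 0" for x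
    using \<open>j \<notin> I\<close> \<open>finite I\<close> by (metis fun_upd_same sum.insert)
  have "c j = 0"
  proof (rule ccontr)
    assume "c j \<noteq> 0"
    have "v x = (\<Sum>i\<in>I. (- c i / c j) * f i x)" for x
    proof -
      have "(\<Sum>i\<in>I. (- c i / c j) * f i x) = - (\<Sum>i\<in>I. c i * f i x) / c j"
        by (simp add: sum_divide_distrib sum_negf)
      also have "\<dots> = v x" using rel[of x] \<open>c j \<noteq> 0\<close> by (simp add: field_simps add_eq_0_iff)
      finally show ?thesis by simp
    qed
    then have "in_span I f v" unfolding in_span_def by (intro exI[of _ "\<lambda>i. - c i / c j"]) simp
    with new show False by blast
  qed
  with rel indep show "\<forall>i\<in>insert j I. c i = 0" unfolding lin_indep_def by simp
qed

section \<open>Rank\<close>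

definition transpose_mat :: "(nat \<Rightarrow> nat \<Rightarrow> real) \<Rightarrow> nat \<Rightarrow> nat \<Rightarrow> real" where
  "transpose_mat X = (\<lambda>a b. X b a)"

lemma transpose_mat_apply [simp]: "transpose_mat X a b = X b a"
  by (simp add: transpose_mat_def)

lemma transpose_mat_transpose_mat [simp]: "transpose_mat (transpose_mat X) = X"
  by (simp add: transpose_mat_def)

text \<open>Zero padding below row nr makes columns that agree on the nr rows equal as functions.\<close>
definition col_vec :: "nat \<Rightarrow> (nat \<Rightarrow> nat \<Rightarrow> real) \<Rightarrow> nat \<Rightarrow> nat \<Rightarrow> real" where
  "col_vec nr X k = (\<lambda>a. if a < nr then X a k else 0)"

definition col_in_span :: "nat \<Rightarrow> (nat \<Rightarrow> nat \<Rightarrow> real) \<Rightarrow> nat set \<Rightarrow> nat \<Rightarrow> bool" where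
  "col_in_span nr X S k \<longleftrightarrow> (\<exists>c. \<forall>a<nr. X a k = (\<Sum>l\<in>S. c l * X a l))"

lemma sum_col_vec:
  "(\<Sum>k\<in>S. c k * col_vec nr X k a) = (if a < nr then (\<Sum>k\<in>S. c k * X a k) else 0)"
  by (simp add: col_vec_def)

lemma indep_cols_iff_lin_indep: "indep_cols nr X S \<longleftrightarrow> lin_indep S (col_vec nr X)"
  unfolding indep_cols_def lin_indep_def sum_col_vec by (metis (no_types, lifting))

lemma in_span_col_vec_iff: "in_span S (col_vec nr X) (col_vec nr X k) \<longleftrightarrow> col_in_span nr X S k"
  unfolding in_span_def col_in_span_def sum_col_vec by (auto simp: col_vec_def)

lemma indep_rows_iff_transpose: "indep_rows nc X U \<longleftrightarrow> indep_cols nc (transpose_mat X) U"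
  by (simp add: indep_rows_def indep_cols_def)

lemma indep_colsD:
  "indep_cols nr X S \<Longrightarrow> \<forall>a<nr. (\<Sum>k\<in>S. c k * X a k) = 0 \<Longrightarrow> k \<in> S \<Longrightarrow> c k = 0"
  unfolding indep_cols_def by blast

lemma indep_cols_coeffs_eq:
  assumes "indep_cols m A S" "\<forall>a<m. (\<Sum>l\<in>S. A a l * y l) = (\<Sum>l\<in>S. A a l * z l)" "l \<in> S"
  shows "y l = z l"
proof -
  have "(\<Sum>k\<in>S. (y k - z k) * A a k) = (\<Sum>l\<in>S. A a l * y l) - (\<Sum>l\<in>S. A a l * z l)" for a
    unfolding sum_subtractf[symmetric] by (intro sum.cong) (simp_all add: algebra_simps)
  with assms(2) have "\<forall>a<m. (\<Sum>k\<in>S. (y k - z k) * A a k) = 0" by simp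
  from indep_colsD[OF assms(1) this assms(3)] show ?thesis by simp
qed

lemma col_in_span_self: "finite S \<Longrightarrow> k \<in> S \<Longrightarrow> col_in_span nr X S k"
  unfolding col_in_span_def
  by (intro exI[of _ "\<lambda>l. if l = k then 1 else 0"]) (simp add: if_distrib[of "\<lambda>c. c * _"] cong: if_cong)

lemma indep_cols_insert:
  assumes "finite T" "indep_cols nr X T" "\<not> col_in_span nr X T k"
  shows "indep_cols nr X (insert k T)"
proof -
  have "k \<notin> T" using assms col_in_span_self by blast
  then have "lin_indep (insert k T) ((col_vec nr X)(k := col_vec nr X k))"
    using assms by (intro lin_indep_insert) (auto simp: indep_cols_iff_lin_indep in_span_col_vec_iff)
  then show ?thesis by (simp add: indep_cols_iff_lin_indep)
qed

lemma indep_cols_card_le: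
  assumes "finite S" "finite T" "indep_cols nr X S" "\<forall>k\<in>S. col_in_span nr X T k"
  shows "card S \<le> card T"
  using assms by (intro lin_indep_card_le[where g = "col_vec nr X"])
    (auto simp: indep_cols_iff_lin_indep in_span_col_vec_iff)

lemma finite_indep_col_cards: "finite {card S | S. S \<subseteq> {..<nc} \<and> indep_cols nr X S}"
proof -
  have "finite {S. S \<subseteq> {..<nc} \<and> indep_cols nr X S}"
    by (rule finite_subset[of _ "Pow {..<nc}"]) auto
  then show ?thesis by (simp add: setcompr_eq_image)
qed

lemma card_le_mat_rank: "S \<subseteq> {..<nc} \<Longrightarrow> indep_cols nr X S \<Longrightarrow> card S \<le> mat_rank nr nc X"
  unfolding mat_rank_def by (rule Max_ge[OF finite_indep_col_cards]) blast

lemma mat_rank_attained: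
  obtains S where "S \<subseteq> {..<nc}" "indep_cols nr X S" "card S = mat_rank nr nc X"
proof -
  have "{} \<subseteq> {..<nc} \<and> indep_cols nr X {}" by (simp add: indep_cols_def)
  then have "{card S | S. S \<subseteq> {..<nc} \<and> indep_cols nr X S} \<noteq> {}" by blast
  from Max_in[OF finite_indep_col_cards this] that show ?thesis unfolding mat_rank_def by auto
qed

lemma col_in_span_of_max_indep:
  assumes "S \<subseteq> {..<nc}" "indep_cols nr X S" "card S = mat_rank nr nc X" "k < nc"
  shows "col_in_span nr X S k"
proof (rule ccontr)
  assume "\<not> col_in_span nr X S k"
  moreover have "finite S" using assms(1) finite_subset by blast
  ultimately have "indep_cols nr X (insert k S)" "k \<notin> S"
    using assms(2) indep_cols_insert col_in_span_self by blast+
  with card_le_mat_rank[of "insert k S" nc nr X] assms \<open>finite S\<close> show False by simp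
qed

lemma indep_cols_extend:
  assumes "S0 \<subseteq> {..<nc}" "indep_cols nr X S0"
  obtains S where "S0 \<subseteq> S" "S \<subseteq> {..<nc}" "indep_cols nr X S" "card S = mat_rank nr nc X"
proof -
  let ?P = "\<lambda>T. S0 \<subseteq> T \<and> T \<subseteq> {..<nc} \<and> indep_cols nr X T"
  have "\<forall>T. ?P T \<longrightarrow> card T < Suc nc"
    by (metis card_lessThan card_mono finite_lessThan less_Suc_eq_le)
  then obtain T where T: "?P T" and T_max: "\<And>T'. ?P T' \<Longrightarrow> card T' \<le> card T"
    using ex_has_greatest_nat[of ?P S0 card "Suc nc"] assms by blast
  have "finite T" using T finite_subset by blast
  obtain S where S: "S \<subseteq> {..<nc}" "indep_cols nr X S" "card S = mat_rank nr nc X"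
    using mat_rank_attained by blast
  have "col_in_span nr X T k" if "k < nc" for k
  proof (rule ccontr)
    assume "\<not> col_in_span nr X T k"
    then have "?P (insert k T)" "k \<notin> T"
      using T that \<open>finite T\<close> indep_cols_insert col_in_span_self by blast+
    with T_max[OF this(1)] \<open>finite T\<close> show False by simp
  qed
  then have "card S \<le> card T"
    using S \<open>finite T\<close> by (intro indep_cols_card_le) (auto intro: finite_subset)
  moreover have "card T \<le> mat_rank nr nc X" using T card_le_mat_rank by blast
  ultimately show ?thesis using that[of T] T S(3) by simp
qed

lemma card_indep_rows_le_mat_rank:
  assumes "U \<subseteq> {..<nr}" "indep_rows nc X U"
  shows "card U \<le> mat_rank nr nc X"
proof -
  obtain S where S: "S \<subseteq> {..<nc}" "indep_cols nr X S" "card S = mat_rank nr nc X"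
    using mat_rank_attained by blast
  have "\<forall>k. \<exists>c. k < nc \<longrightarrow> (\<forall>a<nr. X a k = (\<Sum>l\<in>S. c l * X a l))"
    using col_in_span_of_max_indep[OF S] unfolding col_in_span_def by blast
  then obtain C where C: "\<And>k a. k < nc \<Longrightarrow> a < nr \<Longrightarrow> X a k = (\<Sum>l\<in>S. C k l * X a l)"
    by metis
  \<comment> \<open>row j of X is the combination of the |S| vectors g l with coefficients X j l\<close>
  define g where "g l b = (if b < nc then C b l else 0)" for l b
  have "in_span S g (col_vec nc (transpose_mat X) j)" if "j \<in> U" for j
    unfolding in_span_def using that assms(1)
    by (intro exI[of _ "\<lambda>l. X j l"]) (auto simp: col_vec_def g_def C mult.commute)
  moreover have "lin_indep U (col_vec nc (transpose_mat X))"
    using assms(2) by (simp add: indep_rows_iff_transpose indep_cols_iff_lin_indep)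
  ultimately have "card U \<le> card S"
    using assms(1) S(1) by (intro lin_indep_card_le) (auto intro: finite_subset)
  with S show ?thesis by simp
qed

lemma mat_rank_transpose: "mat_rank nc nr (transpose_mat X) = mat_rank nr nc X"
proof (rule antisym)
  obtain S where "S \<subseteq> {..<nr}" "indep_cols nc (transpose_mat X) S"
    "card S = mat_rank nc nr (transpose_mat X)"
    using mat_rank_attained by blast
  then show "mat_rank nc nr (transpose_mat X) \<le> mat_rank nr nc X"
    using card_indep_rows_le_mat_rank[of S nr nc X] by (simp add: indep_rows_iff_transpose)
next
  obtain S where "S \<subseteq> {..<nc}" "indep_cols nr X S" "card S = mat_rank nr nc X"
    using mat_rank_attained by blast
  then show "mat_rank nr nc X \<le> mat_rank nc nr (transpose_mat X)"
    using card_indep_rows_le_mat_rank[of S nc nr "transpose_mat X"]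
    by (simp add: indep_rows_iff_transpose)
qed

definition row_basis :: "nat \<Rightarrow> nat \<Rightarrow> (nat \<Rightarrow> nat \<Rightarrow> real) \<Rightarrow> nat set \<Rightarrow> bool" where
  "row_basis nr nc X U \<longleftrightarrow> U \<subseteq> {..<nr} \<and> indep_rows nc X U \<and> card U = mat_rank nr nc X"

lemma row_in_span_row_basis:
  assumes "row_basis nr nc X U" "j < nr"
  obtains d where "\<forall>b<nc. X j b = (\<Sum>u\<in>U. d u * X u b)"
proof -
  have "col_in_span nc (transpose_mat X) U j"
    using assms mat_rank_transpose[of nc nr X]
    by (intro col_in_span_of_max_indep) (auto simp: row_basis_def indep_rows_iff_transpose)
  with that show ?thesis unfolding col_in_span_def by auto
qed

lemma sum_row_combination:
  fixes A :: "nat \<Rightarrow> nat \<Rightarrow> real"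
  assumes "T \<subseteq> {..<r}" "\<forall>b<r. A a b = (\<Sum>u\<in>U. d u * A u b)"
  shows "(\<Sum>l\<in>T. A a l * z l) = (\<Sum>u\<in>U. d u * (\<Sum>l\<in>T. A u l * z l))"
proof -
  have "A a l * z l = (\<Sum>u\<in>U. d u * (A u l * z l))" if "l \<in> T" for l
  proof -
    have "A a l * z l = (\<Sum>u\<in>U. d u * A u l) * z l" using that assms by auto
    also have "\<dots> = (\<Sum>u\<in>U. d u * (A u l * z l))" by (simp add: sum_distrib_right mult.assoc)
    finally show ?thesis .
  qed
  then have "(\<Sum>l\<in>T. A a l * z l) = (\<Sum>l\<in>T. \<Sum>u\<in>U. d u * (A u l * z l))"
    by simp
  also have "\<dots> = (\<Sum>u\<in>U. d u * (\<Sum>l\<in>T. A u l * z l))"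
    by (subst sum.swap) (simp add: sum_distrib_left)
  finally show ?thesis .
qed

section \<open>Inverses of square submatrices\<close>

definition is_block_inverse ::
    "(nat \<Rightarrow> nat \<Rightarrow> real) \<Rightarrow> nat set \<Rightarrow> nat set \<Rightarrow> (nat \<Rightarrow> nat \<Rightarrow> real) \<Rightarrow> bool" where
  "is_block_inverse A U S X \<longleftrightarrow> (\<forall>l u. (l \<notin> S \<or> u \<notin> U) \<longrightarrow> X l u = 0) \<and>
     (\<forall>u\<in>U. \<forall>u'\<in>U. (\<Sum>l\<in>S. A u l * X l u') = (if u = u' then 1 else 0))"

lemma indep_cols_on_row_basis:
  assumes U: "row_basis m r A U" and S: "S \<subseteq> {..<r}" "indep_cols m A S"
    and zero: "\<forall>u\<in>U. (\<Sum>l\<in>S. A u l * c l) = 0"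
  shows "\<forall>l\<in>S. c l = 0"
proof -
  have "(\<Sum>l\<in>S. c l * A a l) = 0" if "a < m" for a
  proof -
    obtain d where d: "\<forall>b<r. A a b = (\<Sum>u\<in>U. d u * A u b)"
      using row_in_span_row_basis[OF U \<open>a < m\<close>] by blast
    have "(\<Sum>l\<in>S. c l * A a l) = (\<Sum>l\<in>S. A a l * c l)" by (simp add: mult.commute)
    also have "\<dots> = 0" using sum_row_combination[OF S(1) d] zero by simp
    finally show ?thesis .
  qed
  with S(2) show ?thesis unfolding indep_cols_def by blast
qed

lemma unit_vec_in_span_block_cols:
  assumes U: "row_basis m r A U"
    and S: "S \<subseteq> {..<r}" "indep_cols m A S" "card S = card U" and "u \<in> U"
  shows "in_span S (\<lambda>l u'. if u' \<in> U then A u' l else 0) (\<lambda>x. if x = u then 1 else 0)"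
    (is "in_span S ?h ?e")
proof (rule ccontr)
  assume "\<not> in_span S ?h ?e"
  have fin: "finite S" "finite U"
    using S(1) U finite_subset by (auto simp: row_basis_def)
  have "lin_indep S ?h"
    unfolding lin_indep_def
  proof (intro allI impI)
    fix c assume zero: "\<forall>x. (\<Sum>l\<in>S. c l * ?h l x) = 0"
    have "(\<Sum>l\<in>S. A u l * c l) = 0" if "u \<in> U" for u
      using zero[rule_format, of u] that by (simp add: mult.commute)
    with indep_cols_on_row_basis[OF U S(1,2)] show "\<forall>l\<in>S. c l = 0" by blast
  qed
  \<comment> \<open>r is a fresh index, as S is contained in {..<r}\<close>
  with \<open>\<not> in_span S ?h ?e\<close> have "lin_indep (insert r S) (?h(r := ?e))"
    using S(1) fin by (intro lin_indep_insert) auto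
  moreover have "in_span U (\<lambda>u x. if x = u then 1 else 0) v" if "\<forall>x. x \<notin> U \<longrightarrow> v x = 0" for v
    unfolding in_span_def using that fin(2)
    by (intro exI[of _ v]) (auto simp: if_distrib[of "\<lambda>c. _ * c"] cong: if_cong)
  then have "\<forall>i\<in>insert r S. in_span U (\<lambda>u x. if x = u then 1 else 0) ((?h(r := ?e)) i)"
    using \<open>u \<in> U\<close> by auto
  ultimately have "card (insert r S) \<le> card U"
    using fin by (intro lin_indep_card_le) auto
  moreover have "r \<notin> S" using S(1) by blast
  ultimately show False using S(3) fin by simp
qed

lemma ex_block_inverse:
  assumes U: "row_basis m r A U"
    and S: "S \<subseteq> {..<r}" "indep_cols m A S" "card S = card U"
  shows "\<exists>X. is_block_inverse A U S X"
proof -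
  have "\<forall>u. \<exists>c. u \<in> U \<longrightarrow>
      (\<forall>x. (if x = u then 1 else 0) = (\<Sum>l\<in>S. c l * (if x \<in> U then A x l else 0)))"
    using unit_vec_in_span_block_cols[OF U S] unfolding in_span_def by blast
  then obtain C where C: "\<And>u x. u \<in> U \<Longrightarrow>
      (if x = u then 1 else 0) = (\<Sum>l\<in>S. C u l * (if x \<in> U then A x l else 0))"
    by metis
  have "is_block_inverse A U S (\<lambda>l u. if l \<in> S \<and> u \<in> U then C u l else 0)"
    unfolding is_block_inverse_def
  proof (intro conjI allI impI ballI)
    fix u u' assume "u \<in> U" "u' \<in> U"
    then show "(\<Sum>l\<in>S. A u l * (if l \<in> S \<and> u' \<in> U then C u' l else 0)) =
        (if u = u' then 1 else 0)"
      using C[of u' u] by (auto simp: mult.commute)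
  qed auto
  then show ?thesis by blast
qed

lemma ex1_block_inverse:
  assumes U: "row_basis m r A U"
    and S: "S \<subseteq> {..<r}" "indep_cols m A S" "card S = card U"
  shows "\<exists>!X. is_block_inverse A U S X"
proof (rule ex_ex1I)
  show "\<exists>X. is_block_inverse A U S X" by (rule ex_block_inverse[OF U S])
next
  fix X Y assume X: "is_block_inverse A U S X" and Y: "is_block_inverse A U S Y"
  show "X = Y"
  proof (intro ext)
    fix l u'
    show "X l u' = Y l u'"
    proof (cases "l \<in> S \<and> u' \<in> U")
      case True
      have "\<forall>u\<in>U. (\<Sum>l\<in>S. A u l * (X l u' - Y l u')) = 0"
        using X Y True by (simp add: is_block_inverse_def right_diff_distrib sum_subtractf)
      from indep_cols_on_row_basis[OF U S(1,2) this] True show ?thesis by simp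
    next
      case False
      with X Y show ?thesis by (simp add: is_block_inverse_def)
    qed
  qed
qed

lemma ens_A_mat_is_block_inverse:
  assumes "row_basis m r A U" "S \<subseteq> {..<r}" "indep_cols m A S" "card S = card U"
  shows "is_block_inverse A U S (ens_A_mat A U S)"
  unfolding ens_A_mat_def is_block_inverse_def[symmetric]
  by (rule theI'[OF ex1_block_inverse[OF assms]])

section \<open>The lexicographic order on finite sets\<close>

definition set_key :: "nat set \<Rightarrow> nat \<times> nat list" where
  "set_key S = (card S, sorted_list_of_set S)"

lemma set_lex_less_iff_set_key: "set_lex_less S T \<longleftrightarrow> set_key S < set_key T"
  by (auto simp: set_lex_less_def set_key_def list_less_def lexordp_conv_lexord)

lemma set_key_inj: "finite S \<Longrightarrow> finite T \<Longrightarrow> set_key S = set_key T \<Longrightarrow> S = T"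
  by (metis set_key_def prod.inject sorted_list_of_set.set_sorted_key_list_of_set)

lemma lex_first_eqI:
  assumes "S \<subseteq> {..<r}" "P S" "\<And>T. T \<subseteq> {..<r} \<Longrightarrow> P T \<Longrightarrow> T \<noteq> S \<Longrightarrow> set_lex_less S T"
  shows "lex_first r P = S"
  unfolding lex_first_def
proof (rule the_equality)
  fix S' assume S': "S' \<subseteq> {..<r} \<and> P S' \<and>
    (\<forall>T. T \<subseteq> {..<r} \<and> P T \<and> T \<noteq> S' \<longrightarrow> set_lex_less S' T)"
  show "S' = S"
  proof (rule ccontr)
    assume "S' \<noteq> S"
    with assms S' have "set_lex_less S S'" "set_lex_less S' S" by blast+
    then show False by (simp add: set_lex_less_iff_set_key)
  qed
qed (use assms in blast)

lemma lex_first_least: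
  assumes "S \<subseteq> {..<r}" "P S"
  shows "lex_first r P \<subseteq> {..<r}" "P (lex_first r P)"
    "\<And>T. T \<subseteq> {..<r} \<Longrightarrow> P T \<Longrightarrow> T \<noteq> lex_first r P \<Longrightarrow> set_lex_less (lex_first r P) T"
proof -
  define F where "F = {T. T \<subseteq> {..<r} \<and> P T}"
  have "finite F" unfolding F_def by (rule finite_subset[of _ "Pow {..<r}"]) auto
  moreover have "F \<noteq> {}" using assms unfolding F_def by blast
  ultimately have "Min (set_key ` F) \<in> set_key ` F" by simp
  then obtain S0 where S0: "S0 \<in> F" "set_key S0 = Min (set_key ` F)" by auto
  have "set_lex_less S0 T" if "T \<in> F" "T \<noteq> S0" for T
  proof -
    have "set_key S0 \<le> set_key T" using S0(2) \<open>finite F\<close> that(1) by simp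
    moreover have "finite T" "finite S0" using that(1) S0(1) by (auto simp: F_def finite_subset)
    then have "set_key S0 \<noteq> set_key T" using set_key_inj that(2) by metis
    ultimately show ?thesis by (simp add: set_lex_less_iff_set_key)
  qed
  then have "lex_first r P = S0" using S0(1) by (intro lex_first_eqI) (auto simp: F_def)
  with S0(1) \<open>\<And>T. T \<in> F \<Longrightarrow> T \<noteq> S0 \<Longrightarrow> set_lex_less S0 T\<close>
  show "lex_first r P \<subseteq> {..<r}" "P (lex_first r P)"
    "\<And>T. T \<subseteq> {..<r} \<Longrightarrow> P T \<Longrightarrow> T \<noteq> lex_first r P \<Longrightarrow> set_lex_less (lex_first r P) T"
    by (auto simp: F_def)
qed

section \<open>Lexicographically first admissible sets\<close>

lemma col_admissible_remove_zero:
  assumes "finite T" "k \<in> T" "\<forall>l\<in>T. 0 \<le> \<beta> l" "\<beta> k = 0"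
    "\<forall>a<m. x a = (\<Sum>l\<in>T. \<beta> l * A a l)"
  shows "col_admissible m A (T - {k}) x"
  unfolding col_admissible_def
proof (intro exI[of _ \<beta>] conjI allI impI)
  show "\<forall>l\<in>T - {k}. 0 \<le> \<beta> l" using assms(3) by blast
  fix a assume "a < m"
  with assms show "x a = (\<Sum>l\<in>T - {k}. \<beta> l * A a l)" by (simp add: sum.remove)
qed

lemma dependent_cols_pos_coeff:
  assumes "\<not> indep_cols m A T"
  obtains c k where "k \<in> T" "0 < c k" "\<forall>a<m. (\<Sum>l\<in>T. c l * A a l) = 0"
proof -
  obtain c k where c: "\<forall>a<m. (\<Sum>l\<in>T. c l * A a l) = 0" and k: "k \<in> T" "c k \<noteq> 0"
    using assms unfolding indep_cols_def by blast
  show ?thesis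
  proof (cases "c k > 0")
    case False
    with k have "0 < (- c) k" by simp
    moreover from c have "\<forall>a<m. (\<Sum>l\<in>T. (- c) l * A a l) = 0" by (simp add: sum_negf)
    ultimately show ?thesis using that k(1) by blast
  qed (use that c k in blast)
qed

text \<open>Subtract the largest multiple of a dependency c (with some positive entry) that keeps the
  coefficients nonnegative: the step length is the least ratio \<alpha> l / c l over c l > 0.\<close>
lemma nonneg_comb_zero_coeff:
  assumes "finite T" "\<forall>l\<in>T. 0 \<le> \<alpha> l" "\<forall>a<m. x a = (\<Sum>l\<in>T. \<alpha> l * A a l)"
    and "\<not> indep_cols m A T"
  obtains \<beta> k where "k \<in> T" "\<beta> k = 0" "\<forall>l\<in>T. 0 \<le> \<beta> l"
    "\<forall>a<m. x a = (\<Sum>l\<in>T. \<beta> l * A a l)"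
proof -
  obtain c' k1 where k1: "k1 \<in> T" "0 < c' k1" and c': "\<forall>a<m. (\<Sum>l\<in>T. c' l * A a l) = 0"
    using dependent_cols_pos_coeff[OF assms(4)] by blast
  define K where "K = {l\<in>T. c' l > 0}"
  have "finite K" "k1 \<in> K" using assms(1) k1 c' by (auto simp: K_def)
  define \<mu> where "\<mu> = Min ((\<lambda>l. \<alpha> l / c' l) ` K)"
  have \<mu>_le: "\<mu> \<le> \<alpha> l / c' l" if "l \<in> K" for l
    unfolding \<mu>_def using \<open>finite K\<close> that by simp
  have "\<mu> \<in> (\<lambda>l. \<alpha> l / c' l) ` K"
    unfolding \<mu>_def using \<open>finite K\<close> \<open>k1 \<in> K\<close> by (intro Min_in) auto
  then obtain k0 where k0: "k0 \<in> K" "\<mu> = \<alpha> k0 / c' k0" by blast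
  have "0 \<le> \<mu>" using k0 assms(2) by (simp add: K_def)
  show ?thesis
  proof (rule that[of k0 "\<lambda>l. \<alpha> l - \<mu> * c' l"])
    show "k0 \<in> T" "\<alpha> k0 - \<mu> * c' k0 = 0" using k0 by (auto simp: K_def)
    show "\<forall>l\<in>T. 0 \<le> \<alpha> l - \<mu> * c' l"
    proof
      fix l assume "l \<in> T"
      show "0 \<le> \<alpha> l - \<mu> * c' l"
      proof (cases "c' l > 0")
        case True
        with \<mu>_le[of l] \<open>l \<in> T\<close> show ?thesis by (simp add: K_def pos_le_divide_eq)
      next
        case False
        then have "\<mu> * c' l \<le> 0" using \<open>0 \<le> \<mu>\<close> by (simp add: mult_nonneg_nonpos)
        moreover have "0 \<le> \<alpha> l" using \<open>l \<in> T\<close> assms(2) by blast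
        ultimately show ?thesis by linarith
      qed
    qed
    have "(\<Sum>l\<in>T. (\<alpha> l - \<mu> * c' l) * A a l) =
        (\<Sum>l\<in>T. \<alpha> l * A a l) - \<mu> * (\<Sum>l\<in>T. c' l * A a l)" for a
      by (simp add: left_diff_distrib sum_subtractf sum_distrib_left mult.assoc)
    with assms(3) c' show "\<forall>a<m. x a = (\<Sum>l\<in>T. (\<alpha> l - \<mu> * c' l) * A a l)"
      by simp
  qed
qed

lemma lex_first_col_admissible:
  assumes "col_admissible m A {..<r} x"
  defines "S \<equiv> lex_first r (\<lambda>S. col_admissible m A S x)"
  shows "S \<subseteq> {..<r}" "col_admissible m A S x"
    and "\<And>T. T \<subseteq> {..<r} \<Longrightarrow> col_admissible m A T x \<Longrightarrow> T \<noteq> S \<Longrightarrow> set_lex_less S T"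
    and "\<And>\<beta> l. \<forall>k\<in>S. 0 \<le> \<beta> k \<Longrightarrow> \<forall>a<m. x a = (\<Sum>k\<in>S. \<beta> k * A a k) \<Longrightarrow> l \<in> S \<Longrightarrow> 0 < \<beta> l"
    and "indep_cols m A S"
proof -
  note least = lex_first_least[of "{..<r}" r "\<lambda>S. col_admissible m A S x", OF order_refl assms(1),
      folded S_def]
  show S: "S \<subseteq> {..<r}" "col_admissible m A S x" by (fact least(1), fact least(2))
  show "\<And>T. T \<subseteq> {..<r} \<Longrightarrow> col_admissible m A T x \<Longrightarrow> T \<noteq> S \<Longrightarrow> set_lex_less S T"
    by (fact least(3))
  have "finite S" using S(1) finite_subset by blast
  have no_zero: "\<beta> l \<noteq> 0"
    if \<beta>: "\<forall>k\<in>S. 0 \<le> \<beta> k" "\<forall>a<m. x a = (\<Sum>k\<in>S. \<beta> k * A a k)" and "l \<in> S" for \<beta> l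
  proof
    assume "\<beta> l = 0"
    with \<open>finite S\<close> \<beta> \<open>l \<in> S\<close> have "col_admissible m A (S - {l}) x"
      by (intro col_admissible_remove_zero)
    moreover have "S - {l} \<subseteq> {..<r}" "S - {l} \<noteq> S" using S(1) \<open>l \<in> S\<close> by auto
    ultimately have "set_lex_less S (S - {l})" by (intro least(3))
    then have "card S \<le> card (S - {l})" by (auto simp: set_lex_less_def)
    with card_Diff1_less[OF \<open>finite S\<close> \<open>l \<in> S\<close>] show False by linarith
  qed
  show "0 < \<beta> l"
    if "\<forall>k\<in>S. 0 \<le> \<beta> k" "\<forall>a<m. x a = (\<Sum>k\<in>S. \<beta> k * A a k)" "l \<in> S" for \<beta> l
    using that(1,3) no_zero[OF that] by (simp add: order_less_le)
  obtain \<alpha> where \<alpha>: "\<forall>k\<in>S. 0 \<le> \<alpha> k" "\<forall>a<m. x a = (\<Sum>k\<in>S. \<alpha> k * A a k)"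
    using S(2) unfolding col_admissible_def by blast
  show "indep_cols m A S"
  proof (rule ccontr)
    assume "\<not> indep_cols m A S"
    from nonneg_comb_zero_coeff[OF \<open>finite S\<close> \<alpha> this] no_zero show False by metis
  qed
qed
section \<open>Recovering a stable column from the ensemble\<close>

definition in_col_space :: "nat \<Rightarrow> nat \<Rightarrow> (nat \<Rightarrow> nat \<Rightarrow> real) \<Rightarrow> (nat \<Rightarrow> real) \<Rightarrow> bool" where
  "in_col_space m r A x \<longleftrightarrow> (\<exists>w. \<forall>a<m. x a = (\<Sum>k<r. A a k * w k))"

lemma in_col_spaceI:
  assumes "T \<subseteq> {..<r}" "\<forall>a<m. x a = (\<Sum>k\<in>T. A a k * z k)"
  shows "in_col_space m r A x"
  unfolding in_col_space_def
proof (intro exI allI impI)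
  fix a assume "a < m"
  have "(\<Sum>k<r. A a k * (if k \<in> T then z k else 0)) = (\<Sum>k\<in>T. A a k * z k)"
    using assms(1) by (intro sum.mono_neutral_cong_right) auto
  with assms(2) \<open>a < m\<close> show "x a = (\<Sum>k<r. A a k * (if k \<in> T then z k else 0))" by simp
qed

lemma agree_on_row_basis:
  assumes U: "row_basis m r A U" and x: "in_col_space m r A x" and T: "T \<subseteq> {..<r}"
    and on_U: "\<forall>u\<in>U. (\<Sum>l\<in>T. A u l * z l) = x u"
  shows "\<forall>a<m. (\<Sum>l\<in>T. A a l * z l) = x a"
proof (intro allI impI)
  fix a assume "a < m"
  obtain w where w: "\<forall>a<m. x a = (\<Sum>k<r. A a k * w k)"
    using x unfolding in_col_space_def by blast
  obtain d where d: "\<forall>b<r. A a b = (\<Sum>u\<in>U. d u * A u b)"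
    using row_in_span_row_basis[OF U \<open>a < m\<close>] by blast
  have "U \<subseteq> {..<m}" using U by (simp add: row_basis_def)
  have "(\<Sum>l\<in>T. A a l * z l) = (\<Sum>u\<in>U. d u * x u)"
    using sum_row_combination[OF T d] on_U by simp
  also have "\<dots> = (\<Sum>u\<in>U. d u * (\<Sum>k<r. A u k * w k))"
    using w \<open>U \<subseteq> {..<m}\<close> by (intro sum.cong) auto
  also have "\<dots> = (\<Sum>k<r. A a k * w k)"
    using sum_row_combination[OF order_refl d] by simp
  also have "\<dots> = x a" using w \<open>a < m\<close> by simp
  finally show "(\<Sum>l\<in>T. A a l * z l) = x a" .
qed

lemma ens_A_mat_solves:
  assumes U: "row_basis m r A U" and x: "in_col_space m r A x"
    and S: "S \<subseteq> {..<r}" "indep_cols m A S" "card S = card U"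
  defines "y \<equiv> \<lambda>l. \<Sum>u\<in>U. ens_A_mat A U S l u * x u"
  shows "\<forall>l. l \<notin> S \<longrightarrow> y l = 0" and "\<forall>a<m. (\<Sum>l\<in>S. A a l * y l) = x a"
proof -
  note inv = ens_A_mat_is_block_inverse[OF U S, unfolded is_block_inverse_def]
  show "\<forall>l. l \<notin> S \<longrightarrow> y l = 0" using inv by (simp add: y_def)
  have "finite U" using U finite_subset by (auto simp: row_basis_def)
  have "(\<Sum>l\<in>S. A u l * y l) = x u" if "u \<in> U" for u
  proof -
    have "(\<Sum>l\<in>S. A u l * y l) = (\<Sum>u'\<in>U. x u' * (\<Sum>l\<in>S. A u l * ens_A_mat A U S l u'))"
      unfolding y_def sum_distrib_left by (subst sum.swap) (simp add: mult_ac)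
    also have "\<dots> = (\<Sum>u'\<in>U. if u' = u then x u' else 0)"
      using inv that by (intro sum.cong) auto
    also have "\<dots> = x u" using that \<open>finite U\<close> by simp
    finally show ?thesis .
  qed
  then show "\<forall>a<m. (\<Sum>l\<in>S. A a l * y l) = x a"
    using agree_on_row_basis[OF U x S(1)] by blast
qed

lemma sum_vsupp:
  assumes "vsupp r w \<subseteq> T" "T \<subseteq> {..<r}"
  shows "(\<Sum>l\<in>T. f l * w l) = (\<Sum>l\<in>vsupp r w. f l * w l)"
  using assms finite_subset[OF assms(2)]
  by (intro sum.mono_neutral_right) (auto simp: vsupp_def)

lemma ensemble_A_vec_vsupp:
  assumes U: "row_basis m r A U" and x: "in_col_space m r A x"
    and "y \<in> (\<lambda>B l. \<Sum>u\<in>U. B l u * x u) ` ensemble_A m r A U"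
  shows "\<forall>l. l \<notin> vsupp r y \<longrightarrow> y l = 0" "\<forall>a<m. (\<Sum>l\<in>vsupp r y. A a l * y l) = x a"
proof -
  from assms(3) obtain S where S: "S \<subseteq> {..<r}" "indep_cols m A S" "card S = card U"
    and y: "y = (\<lambda>l. \<Sum>u\<in>U. ens_A_mat A U S l u * x u)"
    unfolding ensemble_A_def by blast
  have y_sol: "\<forall>l. l \<notin> S \<longrightarrow> y l = 0" "\<forall>a<m. (\<Sum>l\<in>S. A a l * y l) = x a"
    unfolding y by (rule ens_A_mat_solves[OF U x S])+
  show "\<forall>l. l \<notin> vsupp r y \<longrightarrow> y l = 0"
    using y_sol(1) S(1) by (auto simp: vsupp_def)
  have "vsupp r y \<subseteq> S" using y_sol(1) by (auto simp: vsupp_def)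
  with y_sol(2) S(1) show "\<forall>a<m. (\<Sum>l\<in>vsupp r y. A a l * y l) = x a"
    by (simp add: sum_vsupp)
qed

lemma solution_in_ensemble_A:
  assumes U: "row_basis m r A U" and S: "S \<subseteq> {..<r}" "indep_cols m A S"
    and z: "\<forall>l. l \<notin> S \<longrightarrow> z l = 0" "\<forall>a<m. (\<Sum>l\<in>S. A a l * z l) = x a"
  shows "z \<in> (\<lambda>B l. \<Sum>u\<in>U. B l u * x u) ` ensemble_A m r A U"
proof -
  obtain S1 where S1: "S \<subseteq> S1" "S1 \<subseteq> {..<r}" "indep_cols m A S1" "card S1 = mat_rank m r A"
    using indep_cols_extend[OF S] by blast
  have "card S1 = card U" using S1(4) U by (simp add: row_basis_def)
  have "finite S1" using S1(2) finite_subset by blast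
  have x: "in_col_space m r A x" using S(1) z(2) by (intro in_col_spaceI[where z = z]) auto
  define y where "y = (\<lambda>l. \<Sum>u\<in>U. ens_A_mat A U S1 l u * x u)"
  have y_sol: "\<forall>l. l \<notin> S1 \<longrightarrow> y l = 0" "\<forall>a<m. (\<Sum>l\<in>S1. A a l * y l) = x a"
    unfolding y_def by (rule ens_A_mat_solves[OF U x S1(2,3) \<open>card S1 = card U\<close>])+
  have z_S1: "\<forall>a<m. (\<Sum>l\<in>S1. A a l * z l) = x a"
  proof (intro allI impI)
    fix a assume "a < m"
    have "(\<Sum>l\<in>S1. A a l * z l) = (\<Sum>l\<in>S. A a l * z l)"
      using \<open>finite S1\<close> S1(1) z(1) by (intro sum.mono_neutral_right) auto
    with z(2) \<open>a < m\<close> show "(\<Sum>l\<in>S1. A a l * z l) = x a" by simp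
  qed
  have "y l = z l" for l
  proof (cases "l \<in> S1")
    case True
    with y_sol(2) z_S1 show ?thesis by (intro indep_cols_coeffs_eq[OF S1(3)]) auto
  next
    case False
    with y_sol(1) S1(1) z(1) show ?thesis by auto
  qed
  then have "y = z" by (rule ext)
  moreover have "y \<in> (\<lambda>B l. \<Sum>u\<in>U. B l u * x u) ` ensemble_A m r A U"
    unfolding ensemble_A_def y_def using S1(2,3) \<open>card S1 = card U\<close> by blast
  ultimately show ?thesis by simp
qed

lemma first_vec_eqI:
  assumes w: "w \<in> \<S>" "\<forall>l<r. 0 \<le> w l"
    and earlier: "\<And>y. y \<in> \<S> \<Longrightarrow> \<forall>l<r. 0 \<le> y l \<Longrightarrow> vsupp r y \<noteq> vsupp r w \<Longrightarrow>
      set_lex_less (vsupp r w) (vsupp r y)"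
    and unique: "\<And>y. y \<in> \<S> \<Longrightarrow> \<forall>l<r. 0 \<le> y l \<Longrightarrow> vsupp r y = vsupp r w \<Longrightarrow> y = w"
  shows "first_vec r \<S> = Some w"
proof -
  define N where "N = {y \<in> \<S>. \<forall>l<r. 0 \<le> y l}"
  have "w \<in> N" using w by (simp add: N_def)
  have "lex_first r (\<lambda>S. S \<in> vsupp r ` N) = vsupp r w"
    by (rule lex_first_eqI) (use \<open>w \<in> N\<close> earlier in \<open>auto simp: N_def vsupp_def\<close>)
  moreover have "{y \<in> N. vsupp r y = vsupp r w} = {w}"
    using \<open>w \<in> N\<close> unique by (auto simp: N_def)
  ultimately show ?thesis using \<open>w \<in> N\<close> unfolding first_vec_def Let_def N_def[symmetric] by auto
qed

lemma vsupp_stable_col: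
  assumes w: "\<forall>k<r. 0 \<le> w k" "\<forall>a<m. x a = (\<Sum>k<r. A a k * w k)"
    and stable: "\<forall>k<r. w k \<noteq> 0 \<longrightarrow> k \<in> lex_first r (\<lambda>S. col_admissible m A S x)"
  shows "vsupp r w = lex_first r (\<lambda>S. col_admissible m A S x)"
proof -
  have adm: "col_admissible m A {..<r} x"
    unfolding col_admissible_def using w by (intro exI[of _ w]) (simp add: mult.commute)
  define S where "S = lex_first r (\<lambda>S. col_admissible m A S x)"
  note S_first = lex_first_col_admissible[OF adm, folded S_def]
  have "vsupp r w \<subseteq> S" using stable by (auto simp: vsupp_def S_def)
  moreover have sol: "\<forall>a<m. x a = (\<Sum>k\<in>S. w k * A a k)"
  proof (intro allI impI)
    fix a assume "a < m"
    have "x a = (\<Sum>k<r. A a k * w k)" using w(2) \<open>a < m\<close> by simp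
    also have "\<dots> = (\<Sum>k\<in>vsupp r w. A a k * w k)" by (rule sum_vsupp) (auto simp: vsupp_def)
    also have "\<dots> = (\<Sum>k\<in>S. A a k * w k)"
      by (rule sum_vsupp[OF \<open>vsupp r w \<subseteq> S\<close> S_first(1), symmetric])
    finally show "x a = (\<Sum>k\<in>S. w k * A a k)" by (simp add: mult.commute)
  qed
  have "S \<subseteq> vsupp r w"
  proof
    fix k assume "k \<in> S"
    have "0 < w k" by (intro S_first(4)[OF _ sol \<open>k \<in> S\<close>]) (use S_first(1) w(1) in auto)
    with \<open>k \<in> S\<close> S_first(1) show "k \<in> vsupp r w" by (auto simp: vsupp_def)
  qed
  ultimately show ?thesis by (simp add: S_def)
qed

lemma ensemble_A_vec_not_before_lex_first:
  assumes U: "row_basis m r A U" and x: "in_col_space m r A x"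
    and y: "y \<in> (\<lambda>B l. \<Sum>u\<in>U. B l u * x u) ` ensemble_A m r A U" "\<forall>l<r. 0 \<le> y l"
    and adm: "col_admissible m A {..<r} x"
    and ne: "vsupp r y \<noteq> lex_first r (\<lambda>S. col_admissible m A S x)"
  shows "set_lex_less (lex_first r (\<lambda>S. col_admissible m A S x)) (vsupp r y)"
proof -
  have "col_admissible m A (vsupp r y) x"
    unfolding col_admissible_def using y(2) ensemble_A_vec_vsupp(2)[OF U x y(1)]
    by (intro exI[of _ y]) (auto simp: vsupp_def mult.commute)
  with lex_first_col_admissible(3)[OF adm, of "vsupp r y"] ne show ?thesis
    by (auto simp: vsupp_def)
qed

lemma first_vec_recovers_stable_col:
  assumes U: "row_basis m r A U"
    and w: "\<forall>k<r. 0 \<le> w k" "\<forall>a<m. x a = (\<Sum>k<r. A a k * w k)"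
    and stable: "\<forall>k<r. w k \<noteq> 0 \<longrightarrow> k \<in> lex_first r (\<lambda>S. col_admissible m A S x)"
  shows "\<exists>w'. first_vec r ((\<lambda>B l. \<Sum>u\<in>U. B l u * x u) ` ensemble_A m r A U) = Some w'
    \<and> (\<forall>l<r. w' l = w l)"
proof -
  let ?\<S> = "(\<lambda>B l. \<Sum>u\<in>U. B l u * x u) ` ensemble_A m r A U"
  have x: "in_col_space m r A x" using w(2) unfolding in_col_space_def by blast
  have adm: "col_admissible m A {..<r} x"
    unfolding col_admissible_def using w by (intro exI[of _ w]) (simp add: mult.commute)
  define S where "S = lex_first r (\<lambda>S. col_admissible m A S x)"
  note S_first = lex_first_col_admissible[OF adm, folded S_def]
  define w0 where "w0 l = (if l < r then w l else 0)" for l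
  have "vsupp r w0 = vsupp r w" by (auto simp: vsupp_def w0_def)
  with vsupp_stable_col[OF w stable] have supp_w0: "vsupp r w0 = S" by (simp add: S_def)
  have w0_zero: "w0 l = 0" if "l \<notin> S" for l
    using that supp_w0 by (auto simp: vsupp_def w0_def)
  have w0_sol: "\<forall>a<m. (\<Sum>l\<in>S. A a l * w0 l) = x a"
  proof (intro allI impI)
    fix a assume "a < m"
    have "(\<Sum>l\<in>S. A a l * w0 l) = (\<Sum>l<r. A a l * w0 l)"
      by (rule sum.mono_neutral_left) (use S_first(1) w0_zero in auto)
    with w(2) \<open>a < m\<close> show "(\<Sum>l\<in>S. A a l * w0 l) = x a" by (simp add: w0_def)
  qed
  have "first_vec r ?\<S> = Some w0"
  proof (rule first_vec_eqI)
    show "w0 \<in> ?\<S>" using S_first(1,5) w0_zero w0_sol by (intro solution_in_ensemble_A[OF U]) auto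
    show "\<forall>l<r. 0 \<le> w0 l" using w(1) by (simp add: w0_def)
  next
    fix y assume y: "y \<in> ?\<S>" "\<forall>l<r. 0 \<le> y l"
    show "set_lex_less (vsupp r w0) (vsupp r y)" if "vsupp r y \<noteq> vsupp r w0"
      using ensemble_A_vec_not_before_lex_first[OF U x y adm] that supp_w0 by (simp add: S_def)
    note y_sol = ensemble_A_vec_vsupp[OF U x y(1)]
    show "y = w0" if "vsupp r y = vsupp r w0"
    proof
      fix l show "y l = w0 l"
      proof (cases "l \<in> S")
        case True
        with y_sol(2) w0_sol supp_w0 that show ?thesis
          by (intro indep_cols_coeffs_eq[OF S_first(5)]) auto
      next
        case False
        with y_sol(1) w0_zero supp_w0 that show ?thesis by simp
      qed
    qed
  qed
  then show ?thesis by (auto simp: w0_def)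
qed

lemma col_admissible_transpose: "col_admissible n (transpose_mat W) S x = row_admissible n W S x"
  by (simp add: col_admissible_def row_admissible_def)

lemma ensemble_W_eq_transpose:
  assumes "row_basis n r (transpose_mat W) V"
  shows "ensemble_W n r W V = transpose_mat ` ensemble_A n r (transpose_mat W) V"
proof -
  have block_inverse_iff: "(\<forall>v l. (v \<notin> V \<or> l \<notin> T) \<longrightarrow> Y v l = 0) \<and>
      (\<forall>v\<in>V. \<forall>v'\<in>V. (\<Sum>l\<in>T. Y v l * W l v') = (if v = v' then 1 else 0)) \<longleftrightarrow>
    is_block_inverse (transpose_mat W) V T (transpose_mat Y)" for T Y
    unfolding is_block_inverse_def by (auto simp: mult.commute)
  have eq: "ens_W_mat W V T = transpose_mat (ens_A_mat (transpose_mat W) V T)"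
    if "T \<subseteq> {..<r}" "indep_cols n (transpose_mat W) T" "card T = card V" for T
  proof -
    note ex1 = ex1_block_inverse[OF assms that]
    have "(THE Y. is_block_inverse (transpose_mat W) V T (transpose_mat Y)) =
        transpose_mat (THE X. is_block_inverse (transpose_mat W) V T X)"
      using ex1 by (metis (mono_tags) theI' the_equality transpose_mat_transpose_mat)
    then show ?thesis
      unfolding ens_W_mat_def ens_A_mat_def block_inverse_iff is_block_inverse_def[symmetric] .
  qed
  let ?I = "{T. T \<subseteq> {..<r} \<and> card T = card V \<and> indep_cols n (transpose_mat W) T}"
  have "ensemble_W n r W V = ens_W_mat W V ` ?I"
    unfolding ensemble_W_def by (auto simp: indep_rows_iff_transpose)
  also have "\<dots> = (\<lambda>T. transpose_mat (ens_A_mat (transpose_mat W) V T)) ` ?I"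
    using eq by (intro image_cong) auto
  also have "\<dots> = transpose_mat ` ensemble_A n r (transpose_mat W) V"
    unfolding ensemble_A_def by auto
  finally show ?thesis .
qed

lemma first_vec_recovers_stable_row:
  assumes V: "row_basis n r (transpose_mat W) V"
    and a: "\<forall>k<r. 0 \<le> a k" "\<forall>b<n. u b = (\<Sum>k<r. a k * W k b)"
    and stable: "\<forall>k<r. a k \<noteq> 0 \<longrightarrow> k \<in> lex_first r (\<lambda>T. row_admissible n W T u)"
  shows "\<exists>a'. first_vec r ((\<lambda>C l. \<Sum>v\<in>V. u v * C v l) ` ensemble_W n r W V) = Some a'
    \<and> (\<forall>l<r. a' l = a l)"
proof -
  have "(\<lambda>C l. \<Sum>v\<in>V. u v * C v l) ` ensemble_W n r W V =
      (\<lambda>B l. \<Sum>v\<in>V. B l v * u v) ` ensemble_A n r (transpose_mat W) V"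
    by (simp add: ensemble_W_eq_transpose[OF V] image_image mult.commute)
  moreover have "\<exists>a'. first_vec r ((\<lambda>B l. \<Sum>v\<in>V. B l v * u v) ` ensemble_A n r (transpose_mat W) V)
      = Some a' \<and> (\<forall>l<r. a' l = a l)"
    using a stable
    by (intro first_vec_recovers_stable_col[OF V]) (simp_all add: col_admissible_transpose mult.commute)
  ultimately show ?thesis by simp
qed

lemma test_PI:
  assumes "\<forall>a<m. \<forall>b<n. M a b = matprod r A W a b"
    and "\<And>i. i < n \<Longrightarrow> \<exists>w. first_vec r ((\<lambda>B l. \<Sum>u\<in>U. B l u * M u i) ` Bs) = Some w
      \<and> (\<forall>l<r. w l = W l i)"
    and "\<And>j. j < m \<Longrightarrow> \<exists>a. first_vec r ((\<lambda>C l. \<Sum>v\<in>V. M j v * C v l) ` Cs) = Some a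
      \<and> (\<forall>l<r. a l = A j l)"
  shows "test_P m n r M U V Bs Cs"
  unfolding test_P_def Let_def
proof (intro conjI allI impI)
  fix i j assume "i < n" "j < m"
  with assms(2,3) obtain w a
    where "first_vec r ((\<lambda>B l. \<Sum>u\<in>U. B l u * M u i) ` Bs) = Some w" "\<forall>l<r. w l = W l i"
      "first_vec r ((\<lambda>C l. \<Sum>v\<in>V. M j v * C v l) ` Cs) = Some a" "\<forall>l<r. a l = A j l"
    by meson
  with assms(1) \<open>i < n\<close> \<open>j < m\<close> show "(\<Sum>l<r.
      the (first_vec r ((\<lambda>C l. \<Sum>v\<in>V. M j v * C v l) ` Cs)) l *
      the (first_vec r ((\<lambda>B l. \<Sum>u\<in>U. B l u * M u i) ` Bs)) l) = M j i"
    by (simp add: matprod_def)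
qed (use assms(2,3) in fastforce)+

theorem mainTheorem9:
  fixes m n r :: nat
    and M A W :: "nat \<Rightarrow> nat \<Rightarrow> real"
    and U V :: "nat set"
  assumes "nonneg_mat m n M"
    and "nonneg_mat m r A"
    and "nonneg_mat r n W"
    and "\<forall>a<m. \<forall>b<n. M a b = matprod r A W a b"
    and "stable m n r M A W"
    and "U \<subseteq> {..<m}" and "card U = mat_rank m r A" and "indep_rows r A U"
    and "V \<subseteq> {..<n}" and "card V = mat_rank r n W" and "indep_cols r W V"
  shows "test_P m n r M U V (ensemble_A m r A U) (ensemble_W n r W V)"
proof (rule test_PI[OF assms(4)])
  have U: "row_basis m r A U" using assms(6-8) by (simp add: row_basis_def)
  have V: "row_basis n r (transpose_mat W) V"
    using assms(9-11) mat_rank_transpose[of n r W] by (simp add: row_basis_def indep_rows_iff_transpose)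
  show "\<exists>w. first_vec r ((\<lambda>B l. \<Sum>u\<in>U. B l u * M u i) ` ensemble_A m r A U) = Some w
      \<and> (\<forall>l<r. w l = W l i)" if "i < n" for i
    using that assms(3-5)
    by (intro first_vec_recovers_stable_col[OF U]) (auto simp: nonneg_mat_def matprod_def stable_def)
  show "\<exists>a. first_vec r ((\<lambda>C l. \<Sum>v\<in>V. M j v * C v l) ` ensemble_W n r W V) = Some a
      \<and> (\<forall>l<r. a l = A j l)" if "j < m" for j
    using that assms(2,4,5)
    by (intro first_vec_recovers_stable_row[OF V]) (auto simp: nonneg_mat_def matprod_def stable_def)
qed

end
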